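(* Let $G=(V,E)$ be a simple undirected graph that is not complete. Then (a) $\textnormal{conv}(X(G))\subseteq\mathbb{R}^{E^c}$ is full-dimensional, and (b) for every $f\in E^c$ the inequality $x_f\le 1$ is facet-defining for $\textnormal{conv}(X(G))$.
   Context: $E^c=\binom{V}{2}\setminus E$. For $x\in\{0,1\}^{E^c}$, $E(x)=\{f\in E^c:x_f=1\}$, and $X(G)=\{x\in\{0,1\}^{E^c}:(V,E\cup E(x))\text{ is chordal}\}$, where a graph is chordal if every cycle with at least four vertices has a chord (an edge joining two nonconsecutive vertices of the cycle). *)

theory Defs
  imports "HOL-Analysis.Analysis"
begin

text \<open>Simple graphs on the finite vertex set UNIV of a finite type 'v;
  edges are 2-element subsets of vertices.\<close>

definition simple_graph :: "'v set set \<Rightarrow> bool" where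
  "simple_graph E \<longleftrightarrow> (\<forall>e\<in>E. card e = 2)"

definition all_pairs :: "'v set set" where
  "all_pairs = {e. card e = 2}"

definition complete_graph :: "'v set set \<Rightarrow> bool" where
  "complete_graph E \<longleftrightarrow> E = all_pairs"

definition non_edges :: "'v set set \<Rightarrow> 'v set set" where
  "non_edges E = all_pairs - E"

definition is_cycle :: "'v set set \<Rightarrow> 'v list \<Rightarrow> bool" where
  "is_cycle F vs \<longleftrightarrow> distinct vs \<and> length vs \<ge> 3 \<and>
     (\<forall>i < length vs. {vs ! i, vs ! ((i + 1) mod length vs)} \<in> F)"

definition has_chord :: "'v set set \<Rightarrow> 'v list \<Rightarrow> bool" where
  "has_chord F vs \<longleftrightarrow> (\<exists>i < length vs. \<exists>j < length vs. i \<noteq> j \<and>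
     j \<noteq> (i + 1) mod length vs \<and> i \<noteq> (j + 1) mod length vs \<and>
     {vs ! i, vs ! j} \<in> F)"

definition chordal :: "'v set set \<Rightarrow> bool" where
  "chordal F \<longleftrightarrow> (\<forall>vs. is_cycle F vs \<and> length vs \<ge> 4 \<longrightarrow> has_chord F vs)"

text \<open>Points of R^{E^c} are represented as vectors in real^('v set) that vanish
  outside E^c.\<close>
definition X_set :: "('v::finite) set set \<Rightarrow> (real ^ ('v set)) set" where
  "X_set E = {x. (\<forall>e. e \<notin> non_edges E \<longrightarrow> x $ e = 0) \<and>
                 (\<forall>e\<in>non_edges E. x $ e = 0 \<or> x $ e = 1) \<and>
                 chordal (E \<union> {e \<in> non_edges E. x $ e = 1})}"

definition full_dim_in :: "(real ^ ('v::finite set)) set \<Rightarrow> 'v set set \<Rightarrow> bool" where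
  "full_dim_in P I \<longleftrightarrow> aff_dim P = int (card I)"

definition coord_le_one_facet_defining :: "'i::finite \<Rightarrow> (real ^ 'i) set \<Rightarrow> bool" where
  "coord_le_one_facet_defining f P \<longleftrightarrow>
     (\<forall>x\<in>P. x $ f \<le> 1) \<and> (P \<inter> {x. x $ f = 1}) facet_of P"

end

theory Submission
  imports Defs
begin

text \<open>Every graph missing at most one pair of vertices is chordal: in a cycle
  v0 v1 v2 v3 ... of length at least four, the distinct pairs {v0, v2} and {v1, v3}
  are both chords, and one of them is present. Hence X(G) contains the all-ones
  vector c and every c - e_g for g in E^c. These |E^c| + 1 points are affinely
  independent, which gives full dimension; those with x_f = 1, namely c and c - e_g
  for g \<noteq> f, span a face of dimension |E^c| - 1 on the hyperplane x_f = 1.\<close>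

lemma has_chord_if_chord_at_start:
  assumes n: "4 \<le> length vs"
    and "{vs ! 0, vs ! 2} \<in> F \<or> {vs ! 1, vs ! 3} \<in> F"
  shows "has_chord F vs"
proof -
  have succ: "(0 + 1) mod length vs = 1" "(1 + 1) mod length vs = 2" "(2 + 1) mod length vs = 3"
    using n by auto
  have wrap: "(3 + 1) mod length vs \<noteq> 1"
    using n by (cases "length vs = 4") auto
  from assms(2) show ?thesis
    unfolding has_chord_def
  proof
    assume "{vs ! 0, vs ! 2} \<in> F"
    then show "\<exists>i<length vs. \<exists>j<length vs. i \<noteq> j \<and> j \<noteq> (i + 1) mod length vs \<and>
        i \<noteq> (j + 1) mod length vs \<and> {vs ! i, vs ! j} \<in> F"
      using n succ by (intro exI[where x=0]) (auto intro!: exI[where x=2])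
  next
    assume "{vs ! 1, vs ! 3} \<in> F"
    then show "\<exists>i<length vs. \<exists>j<length vs. i \<noteq> j \<and> j \<noteq> (i + 1) mod length vs \<and>
        i \<noteq> (j + 1) mod length vs \<and> {vs ! i, vs ! j} \<in> F"
      using n succ wrap by (intro exI[where x=1]) (auto intro!: exI[where x=3])
  qed
qed

lemma chordal_if_missing_at_most_one_pair:
  assumes "all_pairs - {f} \<subseteq> F"
  shows "chordal F"
  unfolding chordal_def
proof (intro allI impI)
  fix vs assume "is_cycle F vs \<and> 4 \<le> length vs"
  then have n: "4 \<le> length vs" and d: "distinct vs" by (auto simp: is_cycle_def)
  have "vs ! 0 \<noteq> vs ! 2" "vs ! 1 \<noteq> vs ! 3" "vs ! 0 \<noteq> vs ! 1" "vs ! 0 \<noteq> vs ! 3"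
    using n d
    by (simp_all add: nth_eq_iff_index_eq length_greater_0_conv[symmetric]
        del: length_greater_0_conv)
  then have "{vs ! 0, vs ! 2} \<in> all_pairs" "{vs ! 1, vs ! 3} \<in> all_pairs"
    "{vs ! 0, vs ! 2} \<noteq> {vs ! 1, vs ! 3}"
    by (auto simp: all_pairs_def doubleton_eq_iff)
  then have "{vs ! 0, vs ! 2} \<in> F \<or> {vs ! 1, vs ! 3} \<in> F"
    using assms by blast
  then show "has_chord F vs"
    using has_chord_if_chord_at_start[OF n] by blast
qed

lemma aff_dim_insert_minus_axes:
  fixes c :: "real ^ 'n"
  shows "aff_dim (insert c ((\<lambda>i. c - axis i 1) ` M)) = int (card M)"
proof -
  let ?A = "(\<lambda>i. axis i (1::real)) ` M"
  have "insert c ((\<lambda>i. c - axis i 1) ` M) = (+) c ` uminus ` insert 0 ?A"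
    by (auto simp: image_image)
  then have "aff_dim (insert c ((\<lambda>i. c - axis i 1) ` M)) = aff_dim ((+) c ` uminus ` insert 0 ?A)"
    by simp
  also have "\<dots> = aff_dim (insert 0 ?A)"
    unfolding aff_dim_translation_eq
    by (rule aff_dim_injective_linear_image) (auto simp: linear_uminus)
  also have "\<dots> = int (dim ?A)"
    by (simp add: aff_dim_zero hull_inc dim_insert span_zero)
  also have "dim ?A = card ?A"
    by (rule dim_eq_card_independent, rule independent_mono[OF independent_Basis])
      (auto simp: Basis_vec_def)
  also have "card ?A = card M"
    by (rule card_image) (simp add: inj_on_def axis_eq_axis)
  finally show ?thesis .
qed

lemma aff_dim_le_card_if_vanishing_outside:
  fixes S :: "(real ^ 'n) set"
  assumes "\<And>x i. x \<in> S \<Longrightarrow> i \<notin> M \<Longrightarrow> x $ i = 0"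
  shows "aff_dim S \<le> int (card M)"
proof -
  let ?L = "{x :: real ^ 'n. \<forall>i. i \<notin> M \<longrightarrow> x $ i = 0}"
  have "aff_dim ?L = int (card M)"
    by (simp add: aff_dim_subspace subspace_def dim_substandard_cart flip: dim_vec_eq)
  moreover have "S \<subseteq> ?L"
    using assms by blast
  then have "aff_dim S \<le> aff_dim ?L"
    by (rule aff_dim_subset)
  ultimately show ?thesis
    by simp
qed

lemma facet_of_supporting_hyperplane:
  fixes S :: "'a::euclidean_space set"
  assumes "convex S" and valid: "\<forall>x\<in>S. a \<bullet> x \<le> b"
    and "y \<in> S" and "a \<bullet> y \<noteq> b"
    and "S \<inter> {x. a \<bullet> x = b} \<noteq> {}"
    and "aff_dim S \<le> aff_dim (S \<inter> {x. a \<bullet> x = b}) + 1"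
  shows "(S \<inter> {x. a \<bullet> x = b}) facet_of S"
proof -
  have face: "(S \<inter> {x. a \<bullet> x = b}) face_of S"
    using face_of_Int_supporting_hyperplane_le[OF \<open>convex S\<close>] valid by blast
  moreover have "S \<inter> {x. a \<bullet> x = b} \<noteq> S"
    using \<open>y \<in> S\<close> \<open>a \<bullet> y \<noteq> b\<close> by blast
  then have "aff_dim (S \<inter> {x. a \<bullet> x = b}) < aff_dim S"
    using face_of_aff_dim_lt[OF \<open>convex S\<close> face] by simp
  ultimately show ?thesis
    using assms(5,6) by (simp add: facet_of_def)
qed

definition indicator_vec :: "'i set \<Rightarrow> real ^ 'i::finite" where
  "indicator_vec D = (\<chi> i. indicator D i)"

lemma indicator_vec_minus_axis:
  "g \<in> D \<Longrightarrow> indicator_vec D - axis g 1 = indicator_vec (D - {g})"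
  by (auto simp: vec_eq_iff indicator_vec_def axis_def indicator_def)

lemma indicator_vec_in_X_set:
  fixes E :: "('v::finite) set set"
  assumes "non_edges E - {g} \<subseteq> D" and "D \<subseteq> non_edges E"
  shows "indicator_vec D \<in> X_set E"
proof -
  have "{e \<in> non_edges E. indicator_vec D $ e = 1} = D"
    using assms(2) by (auto simp: indicator_vec_def indicator_def)
  moreover have "all_pairs - {g} \<subseteq> E \<union> D"
    using assms(1) by (auto simp: non_edges_def)
  ultimately have "chordal (E \<union> {e \<in> non_edges E. indicator_vec D $ e = 1})"
    by (simp add: chordal_if_missing_at_most_one_pair)
  then show ?thesis
    using assms(2) by (auto simp: X_set_def indicator_vec_def indicator_def)
qed

lemma X_set_vanishes_outside_non_edges:
  "x \<in> X_set E \<Longrightarrow> e \<notin> non_edges E \<Longrightarrow> x $ e = 0"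
  by (simp add: X_set_def)

lemma convex_hull_X_set_coord_le_one:
  fixes E :: "('v::finite) set set"
  assumes "x \<in> convex hull X_set E"
  shows "x $ f \<le> 1"
proof -
  have "convex hull X_set E \<subseteq> {x. x $ f \<le> 1}"
  proof (rule hull_minimal)
    show "X_set E \<subseteq> {x. x $ f \<le> 1}"
      by (auto simp: X_set_def) (metis order.refl zero_le_one)
    show "convex {x :: real ^ 'v set. x $ f \<le> 1}"
      using convex_halfspace_le[of "axis f (1::real)" 1] by (simp add: inner_axis')
  qed
  then show ?thesis
    using assms by blast
qed

lemma indicator_vec_minus_axes_subset_X_set:
  fixes E :: "('v::finite) set set"
  assumes "M \<subseteq> non_edges E"
  shows "insert (indicator_vec (non_edges E)) ((\<lambda>g. indicator_vec (non_edges E) - axis g 1) ` M)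
    \<subseteq> X_set E"
proof -
  have "indicator_vec (non_edges E) \<in> X_set E"
    by (rule indicator_vec_in_X_set) auto
  moreover have "indicator_vec (non_edges E) - axis g 1 \<in> X_set E" if "g \<in> M" for g
    using that assms
    by (simp add: indicator_vec_minus_axis indicator_vec_in_X_set[of E g] subset_iff)
  ultimately show ?thesis
    by blast
qed

lemma aff_dim_convex_hull_X_set:
  fixes E :: "('v::finite) set set"
  shows "aff_dim (convex hull X_set E) = int (card (non_edges E))"
proof -
  have "aff_dim (X_set E) \<le> int (card (non_edges E))"
    by (rule aff_dim_le_card_if_vanishing_outside) (rule X_set_vanishes_outside_non_edges)
  moreover have "int (card (non_edges E)) \<le> aff_dim (X_set E)"
    using aff_dim_subset[OF indicator_vec_minus_axes_subset_X_set[of "non_edges E" E]]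
    by (simp only: aff_dim_insert_minus_axes)
  ultimately show ?thesis
    by (simp add: aff_dim_convex_hull)
qed

lemma coord_eq_one_facet_of_convex_hull_X_set:
  fixes E :: "('v::finite) set set"
  assumes f: "f \<in> non_edges E"
  shows "(convex hull X_set E \<inter> {x. x $ f = 1}) facet_of convex hull X_set E"
proof -
  let ?P = "convex hull X_set E"
  let ?F = "?P \<inter> {x. x $ f = 1}"
  let ?c = "indicator_vec (non_edges E)"
  let ?star = "insert ?c ((\<lambda>g. ?c - axis g 1) ` (non_edges E - {f}))"
  have "?c $ f = 1"
    using f by (simp add: indicator_vec_def)
  moreover have "(?c - axis g 1) $ f = 1" if "g \<in> non_edges E - {f}" for g
  proof -
    have "f \<noteq> g" using that by blast
    then show ?thesis using f by (simp add: indicator_vec_def axis_def)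
  qed
  ultimately have "x $ f = 1" if "x \<in> ?star" for x
    using that by blast
  then have "?star \<subseteq> X_set E \<inter> {x. x $ f = 1}"
    using indicator_vec_minus_axes_subset_X_set[of "non_edges E - {f}" E] by blast
  then have star: "?star \<subseteq> ?F"
    using hull_subset[of "X_set E" convex] by blast
  have "0 < card (non_edges E)"
    using f card_gt_0_iff by fastforce
  then have "int (card (non_edges E)) - 1 = int (card (non_edges E - {f}))"
    using f by (simp add: card_Diff_singleton of_nat_diff)
  also have "\<dots> \<le> aff_dim ?F"
    using aff_dim_subset[OF star] by (simp only: aff_dim_insert_minus_axes)
  finally have "aff_dim ?P \<le> aff_dim ?F + 1"
    by (simp add: aff_dim_convex_hull_X_set)
  moreover have "?F \<noteq> {}"
    using star by blast
  moreover have "?c - axis f 1 \<in> ?P"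
    using indicator_vec_minus_axes_subset_X_set[of "{f}" E] f hull_subset[of "X_set E" convex]
    by auto
  moreover have "axis f 1 \<bullet> (?c - axis f 1) \<noteq> 1"
    using f by (simp add: inner_axis' indicator_vec_def)
  moreover have "{x. axis f 1 \<bullet> x = 1} = {x :: real ^ 'v set. x $ f = 1}"
    by (simp add: inner_axis')
  ultimately show ?thesis
    using facet_of_supporting_hyperplane[of ?P "axis f 1" 1 "?c - axis f 1"]
      convex_hull_X_set_coord_le_one[of _ E]
    by (simp add: inner_axis')
qed

theorem theorem1:
  fixes E :: "('v::finite) set set"
  assumes "simple_graph E"
    and "\<not> complete_graph E"
  shows "full_dim_in (convex hull (X_set E)) (non_edges E)
       \<and> (\<forall>f \<in> non_edges E. coord_le_one_facet_defining f (convex hull (X_set E)))"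
  using aff_dim_convex_hull_X_set[of E] coord_eq_one_facet_of_convex_hull_X_set[of _ E]
    convex_hull_X_set_coord_le_one[of _ E]
  by (simp add: full_dim_in_def coord_le_one_facet_defining_def)

end
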